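(* Consider the Markovian switching system $x_{k+1}=f(x_k,u_k,\theta_k)$ with constraints $(x_k,u_k)\in Y_{\theta_k}$, stage cost $\ell$, and suppose the controllability assumption below holds (together with the well-posedness assumption). Let $X_N\subseteq\mathbb{R}^n\times\mathcal{N}$ be the set of pairs $(x,\theta)$ for which the EMPC problem $\mathbb{P}(x,\theta)$ is feasible, and let $\kappa_N$ be the associated receding horizon control law. If $\mathbb{P}(x_k,\theta_k)$ is feasible, then $\mathbb{P}(x_{k+1},\theta_{k+1})$ is feasible, where $x_{k+1}=f(x_k,\kappa_N(x_k,\theta_k),\theta_k)$ and $\theta_{k+1}$ is any element of $\mathcal{C}(\theta_k)$.
   Context: Let $\mathcal{N}=\{1,\dots,\nu\}$ and let $\{\theta_k\}_{k\ge 0}$ be a time-homogeneous Markov chain on $\mathcal{N}$ with transition matrix $P=(p_{ij})$ and initial distribution $v$, defined on a filtered probability space $(\Omega,\mathfrak{F},\{\mathfrak{F}_k\}_k,\mathbb{P})$, where $\mathfrak{F}_k$ is the $\sigma$-algebra generated by the history of states, inputs and modes up to time $k$. The system is $x_{k+1}=f(x_k,u_k,\theta_k)$ with $x_k\in\mathbb{R}^n$, $u_k\in\mathbb{R}^m$; at time $k$ both $x_k$ and $\theta_k$ are measured. Constraints: $(x_k,u_k)\in Y_{\theta_k}$, $Y_\theta\subseteq\mathbb{R}^n\times\mathbb{R}^m$. Stage cost $\ell:\mathbb{R}^n\times\mathbb{R}^m\times\mathcal{N}\to\mathbb{R}$. Write $u\lhd\mathfrak{F}_k$ to mean that the random variable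 $u$ is $\mathfrak{F}_k$-measurable. The cover of $i\in\mathcal{N}$ is $\mathcal{C}(i)=\{j\in\mathcal{N}: p_{ij}>0\}$; a bet node of $i$ is some $\mathrm{bet}(i)\in\mathcal{C}(i)$ with $p_{i\,\mathrm{bet}(i)}\ge p_{ij}$ for all $j\in\mathcal{C}(i)$. Well-posedness assumption: for each $\theta$, $\ell(\cdot,\cdot,\theta)$ is nonnegative, lower semicontinuous and level-bounded in $u$ locally uniformly in $x$ (for every $\bar x$ there is a neighbourhood $V$ of $\bar x$ such that $\{(x,u):x\in V,\ \ell(x,u,\theta)\le\alpha\}$ is bounded for every $\alpha$); $f(\cdot,\cdot,\theta)$ is continuous; $Y_\theta$ is nonempty and compact; $\{\theta_k\}$ is irreducible and aperiodic. Optimal steady states: $(x_s^\theta,u_s^\theta)$ is a minimizer of $\ell_s(\theta):=\min_{x,u}\{\ell(x,u,\theta): f(x,u,\theta)=x,\ (x,u)\in Y_\theta\}$. Controllability assumption: for all $i,j\in\mathcal{N}$ there is a control law $\bar u_s:\mathbb{R}^n\times\mathcal{N}\to\mathbb{R}^m$ with $\bar u_s(x_s^i,j)=\bar u_s^{i,j}$ such that $(x_s^i,\bar u_s^{i,j})\in Y_j$ and $f(x_s^i,\bar u_s^{i,j},j)=x_s^{\mathrm{bet}(j)}$. EMPC problem $\mathbb{P}(x,\theta)$: $V_N^\star(x,\theta)=\inf_{\mathbf{u}_N}V_N(x,\theta,\mathbf{u}_N)$, where $\mathbf{u}_N=(u_0,\dots,u_{N-1})$ and $V_N(x_0,\theta_0,\mathbf{u}_N)=\mathbb{E}[\sum_{j=0}^{N-1}\ell(x_j,u_j,\theta_j)\mid\mathfrak{F}_0]$,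 subject to, for $k=0,\dots,N-1$: $x_{k+1}=f(x_k,u_k,\theta_k)$, $(x_k,u_k)\in Y_{\theta_k}$, $(x_0,\theta_0)=(x,\theta)$, $x_N=x_s^{\mathrm{bet}(\theta_{N-1})}$, $u_k\lhd\mathfrak{F}_k$. If $\mathbf{u}^\star(x,\theta)=(u_0^\star(x,\theta),\dots)$ is an optimizer, the receding horizon law is $\kappa_N(x,\theta)=u_0^\star(x,\theta)$. *)

theory Defs
  imports "HOL-Analysis.Analysis"
begin

definition modes :: "nat \<Rightarrow> nat set" where
  "modes nu = {1..nu}"

definition stochastic_matrix :: "nat \<Rightarrow> (nat \<Rightarrow> nat \<Rightarrow> real) \<Rightarrow> bool" where
  "stochastic_matrix nu p \<longleftrightarrow>
     (\<forall>i\<in>modes nu. \<forall>j\<in>modes nu. p i j \<ge> 0) \<and>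
     (\<forall>i\<in>modes nu. (\<Sum>j\<in>modes nu. p i j) = 1)"

fun mpow :: "nat \<Rightarrow> (nat \<Rightarrow> nat \<Rightarrow> real) \<Rightarrow> nat \<Rightarrow> nat \<Rightarrow> nat \<Rightarrow> real" where
  "mpow nu p 0 i j = (if i = j then 1 else 0)"
| "mpow nu p (Suc k) i j = (\<Sum>l\<in>modes nu. mpow nu p k i l * p l j)"

definition irreducible_chain :: "nat \<Rightarrow> (nat \<Rightarrow> nat \<Rightarrow> real) \<Rightarrow> bool" where
  "irreducible_chain nu p \<longleftrightarrow>
     (\<forall>i\<in>modes nu. \<forall>j\<in>modes nu. \<exists>k>0. mpow nu p k i j > 0)"

definition aperiodic_chain :: "nat \<Rightarrow> (nat \<Rightarrow> nat \<Rightarrow> real) \<Rightarrow> bool" where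
  "aperiodic_chain nu p \<longleftrightarrow>
     (\<forall>i\<in>modes nu. Gcd {k. k > 0 \<and> mpow nu p k i i > 0} = 1)"

definition cover :: "nat \<Rightarrow> (nat \<Rightarrow> nat \<Rightarrow> real) \<Rightarrow> nat \<Rightarrow> nat set" where
  "cover nu p i = {j\<in>modes nu. p i j > 0}"

definition is_bet :: "nat \<Rightarrow> (nat \<Rightarrow> nat \<Rightarrow> real) \<Rightarrow> (nat \<Rightarrow> nat) \<Rightarrow> bool" where
  "is_bet nu p bet \<longleftrightarrow>
     (\<forall>i\<in>modes nu. bet i \<in> cover nu p i \<and> (\<forall>j\<in>cover nu p i. p i (bet i) \<ge> p i j))"

definition lsc :: "('a::topological_space \<Rightarrow> real) \<Rightarrow> bool" where
  "lsc g \<longleftrightarrow> (\<forall>z. \<forall>e>0. \<forall>\<^sub>F w in nhds z. g z - e < g w)"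

definition level_bounded_loc_unif ::
    "('x::metric_space \<Rightarrow> 'u::metric_space \<Rightarrow> real) \<Rightarrow> bool" where
  "level_bounded_loc_unif g \<longleftrightarrow>
     (\<forall>xb. \<exists>V. open V \<and> xb \<in> V \<and>
        (\<forall>\<alpha>::real. bounded {(x, u). x \<in> V \<and> g x u \<le> \<alpha>}))"

definition optimal_steady_state ::
    "('x \<Rightarrow> 'u \<Rightarrow> nat \<Rightarrow> real) \<Rightarrow> ('x \<Rightarrow> 'u \<Rightarrow> nat \<Rightarrow> 'x) \<Rightarrow> (nat \<Rightarrow> ('x \<times> 'u) set)
      \<Rightarrow> nat \<Rightarrow> 'x \<Rightarrow> 'u \<Rightarrow> bool" where
  "optimal_steady_state l f Y th xs us \<longleftrightarrow>
     f xs us th = xs \<and> (xs, us) \<in> Y th \<and>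
     (\<forall>x u. f x u th = x \<and> (x, u) \<in> Y th \<longrightarrow> l xs us th \<le> l x u th)"

text \<open>Policies: since x_0 is fixed and the dynamics are deterministic, an
  F_k-measurable input u_k is a function of the mode history [theta_0,...,theta_k].
  A policy is therefore a map from mode histories (lists) to inputs.
  traj f u x0 k hs is the state x_k along the mode path hs (hs ! i = theta_i).\<close>
fun traj :: "('x \<Rightarrow> 'u \<Rightarrow> nat \<Rightarrow> 'x) \<Rightarrow> (nat list \<Rightarrow> 'u) \<Rightarrow> 'x \<Rightarrow> nat \<Rightarrow> nat list \<Rightarrow> 'x" where
  "traj f u x0 0 hs = x0"
| "traj f u x0 (Suc k) hs = f (traj f u x0 k hs) (u (take (Suc k) hs)) (hs ! k)"

definition all_paths :: "nat \<Rightarrow> nat \<Rightarrow> nat \<Rightarrow> nat list set" where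
  "all_paths nu N th = {hs. length hs = N \<and> set hs \<subseteq> modes nu \<and> hs ! 0 = th}"

definition path_prob :: "(nat \<Rightarrow> nat \<Rightarrow> real) \<Rightarrow> nat list \<Rightarrow> real" where
  "path_prob p hs = (\<Prod>i<length hs - 1. p (hs ! i) (hs ! Suc i))"

definition adm_paths :: "nat \<Rightarrow> (nat \<Rightarrow> nat \<Rightarrow> real) \<Rightarrow> nat \<Rightarrow> nat \<Rightarrow> nat list set" where
  "adm_paths nu p N th = {hs \<in> all_paths nu N th. \<forall>i. Suc i < N \<longrightarrow> p (hs ! i) (hs ! Suc i) > 0}"

text \<open>Feasibility of a policy for P(x,theta): constraints hold almost surely.\<close>
definition feasible_policy where
  "feasible_policy nu p f Y xs bet N x th u \<longleftrightarrow>
     (\<forall>hs\<in>adm_paths nu p N th.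
        (\<forall>k<N. (traj f u x k hs, u (take (Suc k) hs)) \<in> Y (hs ! k)) \<and>
        traj f u x N hs = xs (bet (hs ! (N - 1))))"

text \<open>Cost V_N(x,theta,u) = E[sum_{j<N} l(x_j,u_j,theta_j) | F_0].\<close>
definition cost_VN where
  "cost_VN nu p f l N x th u =
     (\<Sum>hs\<in>all_paths nu N th. path_prob p hs *
        (\<Sum>k<N. l (traj f u x k hs) (u (take (Suc k) hs)) (hs ! k)))"

definition optimal_policy where
  "optimal_policy nu p f Y l xs bet N x th u \<longleftrightarrow>
     feasible_policy nu p f Y xs bet N x th u \<and>
     (\<forall>u'. feasible_policy nu p f Y xs bet N x th u' \<longrightarrow>
        cost_VN nu p f l N x th u \<le> cost_VN nu p f l N x th u')"

definition XN where
  "XN nu p f Y xs bet N = {(x, th). th \<in> modes nu \<and> (\<exists>u. feasible_policy nu p f Y xs bet N x th u)}"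

end

theory Submission
  imports Defs
begin

text \<open>Shift a feasible policy by one step: for a successor mode \<open>\<theta>'\<close> of \<open>\<theta>\<close>, every admissible
  path \<open>\<theta>', \<theta>\<^sub>1, \<dots>\<close> extends to the admissible path \<open>\<theta>, \<theta>', \<theta>\<^sub>1, \<dots>\<close> of the old problem, so the
  old policy steers the first \<open>N - 1\<close> steps and leaves the state at the steady state of the bet
  node of the last mode. The controllability assumption supplies one more admissible input
  that moves it to the steady state of the bet node of the new last mode.\<close>

lemma traj_take: "k \<le> n \<Longrightarrow> traj f u x k (take n hs) = traj f u x k hs"
  by (induction k) (simp_all add: min_def)

lemma traj_Cons_shift:
  assumes "\<And>ys. length ys < N \<Longrightarrow> v ys = u (th # ys)"
    and "k \<le> N - 1" and "length hs = N"
  shows "traj f v (f x (u [th]) th) k hs = traj f u x (Suc k) (th # hs)"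
  using assms(2,3)
proof (induction k)
  case (Suc k)
  then have "v (take (Suc k) hs) = u (take (Suc (Suc k)) (th # hs))"
    using assms(1) by simp
  with Suc show ?case by simp
qed simp

lemma is_bet_in_modes: "is_bet nu p bet \<Longrightarrow> i \<in> modes nu \<Longrightarrow> bet i \<in> modes nu"
  by (auto simp: is_bet_def cover_def)

lemma adm_paths_take_Cons:
  assumes "hs \<in> adm_paths nu p N th'" and "th' \<in> cover nu p th" and "th \<in> modes nu" and "N \<ge> 1"
  shows "take N (th # hs) \<in> adm_paths nu p N th"
  unfolding adm_paths_def all_paths_def
proof (intro CollectI conjI allI impI)
  have len: "length hs = N" and hs_modes: "set hs \<subseteq> modes nu" and hd: "hs ! 0 = th'"
    and step: "\<And>i. Suc i < N \<Longrightarrow> p (hs ! i) (hs ! Suc i) > 0"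
    using assms(1) by (auto simp: adm_paths_def all_paths_def)
  show "length (take N (th # hs)) = N" using len assms(4) by simp
  show "set (take N (th # hs)) \<subseteq> modes nu"
    using hs_modes assms(3) set_take_subset[of N "th # hs"] by auto
  show "take N (th # hs) ! 0 = th" using assms(4) by simp
  fix i assume i: "Suc i < N"
  show "p (take N (th # hs) ! i) (take N (th # hs) ! Suc i) > 0"
  proof (cases i)
    case 0
    then show ?thesis using i hd assms(2) by (simp add: cover_def)
  next
    case (Suc j)
    then show ?thesis using i step[of j] by simp
  qed
qed

definition shifted_policy ::
    "('x \<Rightarrow> 'u \<Rightarrow> nat \<Rightarrow> 'x) \<Rightarrow> (nat list \<Rightarrow> 'u) \<Rightarrow> ('x \<Rightarrow> nat \<Rightarrow> 'u) \<Rightarrow> nat \<Rightarrow> 'x \<Rightarrow> nat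
      \<Rightarrow> nat list \<Rightarrow> 'u" where
  "shifted_policy f u ubar N x th ys =
     (if length ys < N then u (th # ys) else ubar (traj f u x N (th # ys)) (ys ! (N - 1)))"

lemma feasible_policy_shifted:
  assumes feas: "feasible_policy nu p f Y xs bet N x th u"
    and th: "th \<in> modes nu" and th': "th' \<in> cover nu p th" and N: "N \<ge> 1"
    and bet: "is_bet nu p bet"
    and ubar: "\<forall>i\<in>modes nu. \<forall>j\<in>modes nu.
                 (xs i, ubar (xs i) j) \<in> Y j \<and> f (xs i) (ubar (xs i) j) j = xs (bet j)"
  shows "feasible_policy nu p f Y xs bet N (f x (u [th]) th) th' (shifted_policy f u ubar N x th)"
  unfolding feasible_policy_def
proof
  define v where "v = shifted_policy f u ubar N x th"
  define x' where "x' = f x (u [th]) th"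
  fix hs assume hs: "hs \<in> adm_paths nu p N th'"
  have len: "length hs = N" and hs_modes: "set hs \<subseteq> modes nu"
    using hs by (auto simp: adm_paths_def all_paths_def)
  let ?gs = "take N (th # hs)"
  have gs_feas: "(\<forall>k<N. (traj f u x k ?gs, u (take (Suc k) ?gs)) \<in> Y (?gs ! k)) \<and>
      traj f u x N ?gs = xs (bet (?gs ! (N - 1)))"
    using feas adm_paths_take_Cons[OF hs th' th N] unfolding feasible_policy_def by blast
  have v_prefix: "\<And>ys. length ys < N \<Longrightarrow> v ys = u (th # ys)"
    by (simp add: v_def shifted_policy_def)
  have shift: "traj f v x' k hs = traj f u x (Suc k) (th # hs)" if "k \<le> N - 1" for k
    unfolding x'_def by (rule traj_Cons_shift[where u=u and th=th, OF v_prefix that len])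
  define b where "b = ?gs ! (N - 1)"
  have b_modes: "b \<in> modes nu"
  proof -
    have "set ?gs \<subseteq> modes nu" and "length ?gs = N"
      using adm_paths_take_Cons[OF hs th' th N] by (auto simp: adm_paths_def all_paths_def)
    then show ?thesis using N nth_mem[of "N - 1" ?gs] by (auto simp: b_def)
  qed
  have last_modes: "hs ! (N - 1) \<in> modes nu" using hs_modes len N by (simp add: subset_iff)
  have u_end: "traj f u x N (th # hs) = xs (bet b)"
    using gs_feas traj_take[of N N f u x "th # hs"] by (simp add: b_def)
  have x_last: "traj f v x' (N - 1) hs = xs (bet b)"
    using shift[of "N - 1"] u_end N by simp
  have v_last: "v (take (Suc (N - 1)) hs) = ubar (xs (bet b)) (hs ! (N - 1))"
    using len N u_end by (simp add: v_def shifted_policy_def)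
  have terminal: "(xs (bet b), ubar (xs (bet b)) (hs ! (N - 1))) \<in> Y (hs ! (N - 1))"
    "f (xs (bet b)) (ubar (xs (bet b)) (hs ! (N - 1))) (hs ! (N - 1)) = xs (bet (hs ! (N - 1)))"
    using ubar is_bet_in_modes[OF bet b_modes] last_modes by blast+
  show "(\<forall>k<N. (traj f v x' k hs, v (take (Suc k) hs)) \<in> Y (hs ! k)) \<and>
      traj f v x' N hs = xs (bet (hs ! (N - 1)))"
  proof (intro conjI allI impI)
    fix k assume k: "k < N"
    show "(traj f v x' k hs, v (take (Suc k) hs)) \<in> Y (hs ! k)"
    proof (cases "Suc k < N")
      case True
      have "(traj f u x (Suc k) ?gs, u (take (Suc (Suc k)) ?gs)) \<in> Y (?gs ! Suc k)"
        using gs_feas True by blast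
      moreover have "traj f u x (Suc k) ?gs = traj f u x (Suc k) (th # hs)"
        using True by (intro traj_take) simp
      ultimately show ?thesis
        using shift[of k] v_prefix[of "take (Suc k) hs"] True len by (simp add: min_def)
    next
      case False
      then have "k = N - 1" using k by simp
      then show ?thesis using terminal(1) x_last v_last by simp
    qed
  next
    have "traj f v x' N hs = traj f v x' (Suc (N - 1)) hs" using N by simp
    also have "\<dots> = xs (bet (hs ! (N - 1)))" using x_last v_last terminal(2) by simp
    finally show "traj f v x' N hs = xs (bet (hs ! (N - 1)))" .
  qed
qed

theorem proposition1:
  fixes nu N :: nat
    and p :: "nat \<Rightarrow> nat \<Rightarrow> real"
    and f :: "real^'n \<Rightarrow> real^'m \<Rightarrow> nat \<Rightarrow> real^'n"
    and Y :: "nat \<Rightarrow> ((real^'n) \<times> (real^'m)) set"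
    and l :: "real^'n \<Rightarrow> real^'m \<Rightarrow> nat \<Rightarrow> real"
    and xs :: "nat \<Rightarrow> real^'n" and us :: "nat \<Rightarrow> real^'m"
    and bet :: "nat \<Rightarrow> nat"
    and u :: "nat list \<Rightarrow> real^'m"
    and x :: "real^'n" and th th' :: nat
  assumes nu: "nu \<ge> 1" and N: "N \<ge> 1"
    and P: "stochastic_matrix nu p"
    and irr: "irreducible_chain nu p" and aper: "aperiodic_chain nu p"
    and l_nonneg: "\<forall>i\<in>modes nu. \<forall>x u. l x u i \<ge> 0"
    and l_lsc: "\<forall>i\<in>modes nu. lsc (\<lambda>z. l (fst z) (snd z) i)"
    and l_lb: "\<forall>i\<in>modes nu. level_bounded_loc_unif (\<lambda>x u. l x u i)"
    and f_cont: "\<forall>i\<in>modes nu. continuous_on UNIV (\<lambda>z. f (fst z) (snd z) i)"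
    and Y_ne: "\<forall>i\<in>modes nu. Y i \<noteq> {}" and Y_cpt: "\<forall>i\<in>modes nu. compact (Y i)"
    and ss: "\<forall>i\<in>modes nu. optimal_steady_state l f Y i (xs i) (us i)"
    and bet: "is_bet nu p bet"
    and ctrb: "\<exists>ubar :: real^'n \<Rightarrow> nat \<Rightarrow> real^'m. \<forall>i\<in>modes nu. \<forall>j\<in>modes nu.
                 (xs i, ubar (xs i) j) \<in> Y j \<and> f (xs i) (ubar (xs i) j) j = xs (bet j)"
    and feas: "(x, th) \<in> XN nu p f Y xs bet N"
    and opt: "optimal_policy nu p f Y l xs bet N x th u"
    and th': "th' \<in> cover nu p th"
  shows "(f x (u [th]) th, th') \<in> XN nu p f Y xs bet N"
proof -
  obtain ubar :: "real^'n \<Rightarrow> nat \<Rightarrow> real^'m" where ubar: "\<forall>i\<in>modes nu. \<forall>j\<in>modes nu.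
      (xs i, ubar (xs i) j) \<in> Y j \<and> f (xs i) (ubar (xs i) j) j = xs (bet j)"
    using ctrb by blast
  have "th \<in> modes nu" using feas by (simp add: XN_def)
  moreover have "feasible_policy nu p f Y xs bet N x th u"
    using opt by (simp add: optimal_policy_def)
  ultimately have "feasible_policy nu p f Y xs bet N (f x (u [th]) th) th'
      (shifted_policy f u ubar N x th)"
    using feasible_policy_shifted th' N bet ubar by metis
  moreover have "th' \<in> modes nu" using th' by (simp add: cover_def)
  ultimately show ?thesis by (auto simp: XN_def)
qed

end
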